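(* Let $(G,\sigma)$ be a signed graph, $\tau:V\to\{\pm1\}$ a switching function, $p>1$, $K\in\mathbb{R}$, $N\in(0,\infty]$ and $x\in V$. Then $(G,\sigma)$ satisfies $CD_p^\sigma(K,N)$ at $x$ if and only if $(G,\sigma^\tau)$ satisfies $CD_p^{\sigma^\tau}(K,N)$ at $x$, where $\sigma^\tau_{uv}=\tau(u)\sigma_{uv}\tau(v)$ for $\{u,v\}\in E$.
   Context: $G=(V,E)$ is a locally finite simple graph with degrees $d_x$; $\sigma:E\to\{\pm1\}$, $\sigma_{xy}=\sigma(\{x,y\})$. For $p>1$: $\Delta_{p}^{\sigma}f(x)=\frac{1}{d_{x}}\sum_{y\sim x}|\sigma_{xy}f(y)-f(x)|^{p-2}(\sigma_{xy}f(y)-f(x))$ (with $|t|^{p-2}t=0$ at $t=0$); $\Gamma_p^\sigma(f,g)(x)=\frac{1}{2d_{x}}\sum_{y\sim x}|\sigma_{xy}f(y)-f(x)|^{p-2}(\sigma_{xy}f(y)-f(x))(\sigma_{xy}g(y)-g(x))$; $\mathscr{L}^\sigma_{p,f}\varphi(x)=\frac{1}{d_{x}}\sum_{y\sim x}|\sigma_{xy}f(y)-f(x)|^{p-2}(\varphi(y)-\varphi(x))$; and $\Gamma_{p,2}^\sigma(f,f)(x)=\frac12\mathscr{L}_{p,f}^\sigma(\Gamma^\sigma_p(f,f))(x)-\Gamma_p^\sigma(f,\Delta_p^\sigma f)(x)$ (defined at any $x$ if $p\ge2$, and at $x$ with $\sigma_{xy}f(y)-f(x)\ne0$ for all $y\sim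 x$ if $1<p<2$). $(G,\sigma)$ satisfies $CD_p^\sigma(K,N)$ at $x$ if $\Gamma_{p,2}^{\sigma}(f,f)(x)\geq\frac{1}{N}(\Delta_{p}^{\sigma}f(x))^{2}+K(\Gamma^{\sigma}_{p}(f,f)(x))^{\frac{2p-2}{p}}$ for every $f:V\to\mathbb{R}$ with $\sigma_{xy}f(y)-f(x)\neq0$ for every neighbor $y\sim x$ ($\frac1N=0$ if $N=\infty$). *)

theory Defs
  imports "HOL-Analysis.Analysis" "HOL-Library.Extended_Real"
begin

definition locally_finite_simple_graph :: "('a \<Rightarrow> 'a \<Rightarrow> bool) \<Rightarrow> bool" where
  "locally_finite_simple_graph adj \<longleftrightarrow>
     (\<forall>x y. adj x y \<longrightarrow> adj y x) \<and> (\<forall>x. \<not> adj x x) \<and> (\<forall>x. finite {y. adj x y})"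

definition nbrs :: "('a \<Rightarrow> 'a \<Rightarrow> bool) \<Rightarrow> 'a \<Rightarrow> 'a set" where
  "nbrs adj x = {y. adj x y}"

definition deg :: "('a \<Rightarrow> 'a \<Rightarrow> bool) \<Rightarrow> 'a \<Rightarrow> real" where
  "deg adj x = real (card (nbrs adj x))"

text \<open>A signature: a function on edges with values in {1,-1}, encoded as a symmetric
  function of the two endpoints (its values off edges are irrelevant).\<close>
definition signature :: "('a \<Rightarrow> 'a \<Rightarrow> bool) \<Rightarrow> ('a \<Rightarrow> 'a \<Rightarrow> real) \<Rightarrow> bool" where
  "signature adj \<sigma> \<longleftrightarrow>
     (\<forall>x y. adj x y \<longrightarrow> \<sigma> x y = \<sigma> y x \<and> (\<sigma> x y = 1 \<or> \<sigma> x y = -1))"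

definition switching_fun :: "('a \<Rightarrow> real) \<Rightarrow> bool" where
  "switching_fun \<tau> \<longleftrightarrow> (\<forall>x. \<tau> x = 1 \<or> \<tau> x = -1)"

definition switch :: "('a \<Rightarrow> real) \<Rightarrow> ('a \<Rightarrow> 'a \<Rightarrow> real) \<Rightarrow> ('a \<Rightarrow> 'a \<Rightarrow> real)" where
  "switch \<tau> \<sigma> = (\<lambda>u v. \<tau> u * \<sigma> u v * \<tau> v)"

definition ppow :: "real \<Rightarrow> real \<Rightarrow> real" where
  "ppow p t = (if t = 0 then 0 else \<bar>t\<bar> powr (p - 2) * t)"

definition sdiff :: "('a \<Rightarrow> 'a \<Rightarrow> real) \<Rightarrow> ('a \<Rightarrow> real) \<Rightarrow> 'a \<Rightarrow> 'a \<Rightarrow> real" where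
  "sdiff \<sigma> f x y = \<sigma> x y * f y - f x"

definition p_laplacian ::
  "('a \<Rightarrow> 'a \<Rightarrow> bool) \<Rightarrow> ('a \<Rightarrow> 'a \<Rightarrow> real) \<Rightarrow> real \<Rightarrow> ('a \<Rightarrow> real) \<Rightarrow> 'a \<Rightarrow> real" where
  "p_laplacian adj \<sigma> p f x =
     (1 / deg adj x) * (\<Sum>y\<in>nbrs adj x. ppow p (sdiff \<sigma> f x y))"

definition Gamma_p ::
  "('a \<Rightarrow> 'a \<Rightarrow> bool) \<Rightarrow> ('a \<Rightarrow> 'a \<Rightarrow> real) \<Rightarrow> real \<Rightarrow> ('a \<Rightarrow> real) \<Rightarrow> ('a \<Rightarrow> real) \<Rightarrow> 'a \<Rightarrow> real" where
  "Gamma_p adj \<sigma> p f g x =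
     (1 / (2 * deg adj x)) * (\<Sum>y\<in>nbrs adj x. ppow p (sdiff \<sigma> f x y) * sdiff \<sigma> g x y)"

text \<open>The linearized operator; its weights \<open>|\<sigma>_xy f(y) - f(x)|^(p-2)\<close> are only used
  where these differences are nonzero (or p \<ge> 2).\<close>
definition L_pf ::
  "('a \<Rightarrow> 'a \<Rightarrow> bool) \<Rightarrow> ('a \<Rightarrow> 'a \<Rightarrow> real) \<Rightarrow> real \<Rightarrow> ('a \<Rightarrow> real) \<Rightarrow> ('a \<Rightarrow> real) \<Rightarrow> 'a \<Rightarrow> real" where
  "L_pf adj \<sigma> p f \<phi> x =
     (1 / deg adj x) * (\<Sum>y\<in>nbrs adj x. \<bar>sdiff \<sigma> f x y\<bar> powr (p - 2) * (\<phi> y - \<phi> x))"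

definition Gamma_p2 ::
  "('a \<Rightarrow> 'a \<Rightarrow> bool) \<Rightarrow> ('a \<Rightarrow> 'a \<Rightarrow> real) \<Rightarrow> real \<Rightarrow> ('a \<Rightarrow> real) \<Rightarrow> 'a \<Rightarrow> real" where
  "Gamma_p2 adj \<sigma> p f x =
     (1/2) * L_pf adj \<sigma> p f (Gamma_p adj \<sigma> p f f) x
     - Gamma_p adj \<sigma> p f (p_laplacian adj \<sigma> p f) x"

definition CD_p ::
  "('a \<Rightarrow> 'a \<Rightarrow> bool) \<Rightarrow> ('a \<Rightarrow> 'a \<Rightarrow> real) \<Rightarrow> real \<Rightarrow> real \<Rightarrow> ereal \<Rightarrow> 'a \<Rightarrow> bool" where
  "CD_p adj \<sigma> p K N x \<longleftrightarrow>
     (\<forall>f :: 'a \<Rightarrow> real. (\<forall>y. adj x y \<longrightarrow> sdiff \<sigma> f x y \<noteq> 0) \<longrightarrow>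
        Gamma_p2 adj \<sigma> p f x \<ge>
          (if N = \<infinity> then 0 else 1 / real_of_ereal N) * (p_laplacian adj \<sigma> p f x)\<^sup>2
          + K * (Gamma_p adj \<sigma> p f f x) powr ((2 * p - 2) / p))"

end

theory Submission
  imports Defs
begin

text \<open>Switching is a gauge transformation: multiplying a test function pointwise by \<open>\<tau>\<close>
  multiplies each signed difference at u by \<open>\<tau>(u) = \<plusminus>1\<close>. As \<open>t \<mapsto> |t|^(p-2) t\<close>
  is odd, the p-Laplacian at x only picks up the factor \<open>\<tau>(x)\<close>, while \<open>\<Gamma>_p\<close>,
  \<open>\<Gamma>_p,2\<close> and the square of the p-Laplacian are unchanged. Since \<open>f \<mapsto> \<tau> f\<close> preserves
  the nondegeneracy condition at x and switching twice by \<open>\<tau>\<close> is the identity, the two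
  curvature conditions are equivalent.\<close>

lemma switching_fun_mult_self: "switching_fun \<tau> \<Longrightarrow> \<tau> u * \<tau> u = 1"
  unfolding switching_fun_def by (metis mult_1_left mult_minus1 minus_minus)

lemma switching_fun_abs: "switching_fun \<tau> \<Longrightarrow> \<bar>\<tau> u\<bar> = 1"
  unfolding switching_fun_def by (metis abs_minus_cancel abs_one)

lemma ppow_mult_unit: "\<bar>c\<bar> = 1 \<Longrightarrow> ppow p (c * t) = c * ppow p t"
  unfolding ppow_def by (auto simp: abs_mult)

lemma switch_switch: "switching_fun \<tau> \<Longrightarrow> switch \<tau> (switch \<tau> \<sigma>) = \<sigma>"
proof (intro ext)
  fix u v assume \<tau>: "switching_fun \<tau>"
  have "\<tau> u * (\<tau> u * \<sigma> u v * \<tau> v) * \<tau> v = (\<tau> u * \<tau> u) * \<sigma> u v * (\<tau> v * \<tau> v)"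
    by (simp add: algebra_simps)
  then show "switch \<tau> (switch \<tau> \<sigma>) u v = \<sigma> u v"
    unfolding switch_def by (simp add: switching_fun_mult_self[OF \<tau>])
qed

lemma sdiff_switch:
  assumes "switching_fun \<tau>"
  shows "sdiff (switch \<tau> \<sigma>) (\<lambda>z. \<tau> z * f z) u v = \<tau> u * sdiff \<sigma> f u v"
proof -
  have "\<tau> u * \<sigma> u v * \<tau> v * (\<tau> v * f v) = \<tau> u * \<sigma> u v * f v * (\<tau> v * \<tau> v)"
    by simp
  then show ?thesis
    unfolding sdiff_def switch_def
    by (simp add: switching_fun_mult_self[OF assms] algebra_simps)
qed

lemma p_laplacian_switch:
  assumes "switching_fun \<tau>"
  shows "p_laplacian adj (switch \<tau> \<sigma>) p (\<lambda>z. \<tau> z * f z) x = \<tau> x * p_laplacian adj \<sigma> p f x"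
  unfolding p_laplacian_def sdiff_switch[OF assms] ppow_mult_unit[OF switching_fun_abs[OF assms]]
  by (simp add: sum_distrib_left)

lemma Gamma_p_switch:
  assumes "switching_fun \<tau>"
  shows "Gamma_p adj (switch \<tau> \<sigma>) p (\<lambda>z. \<tau> z * f z) (\<lambda>z. \<tau> z * g z) x = Gamma_p adj \<sigma> p f g x"
proof -
  have summand: "ppow p (\<tau> x * s) * (\<tau> x * r) = ppow p s * r" for s r
  proof -
    have "ppow p (\<tau> x * s) * (\<tau> x * r) = (\<tau> x * \<tau> x) * (ppow p s * r)"
      by (simp add: ppow_mult_unit[OF switching_fun_abs[OF assms]])
    then show ?thesis by (simp add: switching_fun_mult_self[OF assms])
  qed
  then show ?thesis
    unfolding Gamma_p_def sdiff_switch[OF assms] summand by simp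
qed

lemma L_pf_switch:
  assumes "switching_fun \<tau>"
  shows "L_pf adj (switch \<tau> \<sigma>) p (\<lambda>z. \<tau> z * f z) \<phi> x = L_pf adj \<sigma> p f \<phi> x"
  unfolding L_pf_def sdiff_switch[OF assms] abs_mult switching_fun_abs[OF assms] by simp

lemma Gamma_p2_switch:
  assumes "switching_fun \<tau>"
  shows "Gamma_p2 adj (switch \<tau> \<sigma>) p (\<lambda>z. \<tau> z * f z) x = Gamma_p2 adj \<sigma> p f x"
proof -
  have Gamma: "Gamma_p adj (switch \<tau> \<sigma>) p (\<lambda>z. \<tau> z * f z) (\<lambda>z. \<tau> z * f z) = Gamma_p adj \<sigma> p f f"
    using Gamma_p_switch[OF assms] by blast
  have laplacian: "p_laplacian adj (switch \<tau> \<sigma>) p (\<lambda>z. \<tau> z * f z) = (\<lambda>y. \<tau> y * p_laplacian adj \<sigma> p f y)"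
    using p_laplacian_switch[OF assms] by blast
  show ?thesis
    unfolding Gamma_p2_def Gamma laplacian L_pf_switch[OF assms] Gamma_p_switch[OF assms] by simp
qed

lemma CD_p_switch:
  assumes \<tau>: "switching_fun \<tau>" and CD: "CD_p adj \<sigma> p K N x"
  shows "CD_p adj (switch \<tau> \<sigma>) p K N x"
  unfolding CD_p_def
proof (intro allI impI)
  fix g :: "'a \<Rightarrow> real"
  assume nondeg: "\<forall>y. adj x y \<longrightarrow> sdiff (switch \<tau> \<sigma>) g x y \<noteq> 0"
  define f where "f = (\<lambda>z. \<tau> z * g z)"
  have g: "g = (\<lambda>z. \<tau> z * f z)"
    unfolding f_def by (simp add: mult.assoc[symmetric] switching_fun_mult_self[OF \<tau>])
  have "\<forall>y. adj x y \<longrightarrow> sdiff \<sigma> f x y \<noteq> 0"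
    using nondeg unfolding g sdiff_switch[OF \<tau>] by simp
  with CD have "Gamma_p2 adj \<sigma> p f x \<ge>
      (if N = \<infinity> then 0 else 1 / real_of_ereal N) * (p_laplacian adj \<sigma> p f x)\<^sup>2
      + K * (Gamma_p adj \<sigma> p f f x) powr ((2 * p - 2) / p)"
    unfolding CD_p_def by blast
  moreover have "(\<tau> x * a)\<^sup>2 = a\<^sup>2" for a
    by (simp add: power_mult_distrib power2_eq_square switching_fun_mult_self[OF \<tau>])
  ultimately show "Gamma_p2 adj (switch \<tau> \<sigma>) p g x \<ge>
      (if N = \<infinity> then 0 else 1 / real_of_ereal N) * (p_laplacian adj (switch \<tau> \<sigma>) p g x)\<^sup>2
      + K * (Gamma_p adj (switch \<tau> \<sigma>) p g g x) powr ((2 * p - 2) / p)"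
    unfolding g Gamma_p2_switch[OF \<tau>] p_laplacian_switch[OF \<tau>] Gamma_p_switch[OF \<tau>] by simp
qed

theorem proposition4p8:
  fixes adj :: "'a \<Rightarrow> 'a \<Rightarrow> bool" and \<sigma> :: "'a \<Rightarrow> 'a \<Rightarrow> real" and \<tau> :: "'a \<Rightarrow> real"
    and p K :: real and N :: ereal and x :: 'a
  assumes "locally_finite_simple_graph adj"
    and "signature adj \<sigma>"
    and "switching_fun \<tau>"
    and "p > 1"
    and "N > 0"
  shows "CD_p adj \<sigma> p K N x \<longleftrightarrow> CD_p adj (switch \<tau> \<sigma>) p K N x"
proof
  show "CD_p adj \<sigma> p K N x \<Longrightarrow> CD_p adj (switch \<tau> \<sigma>) p K N x"
    by (rule CD_p_switch[OF assms(3)])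
  assume "CD_p adj (switch \<tau> \<sigma>) p K N x"
  then have "CD_p adj (switch \<tau> (switch \<tau> \<sigma>)) p K N x"
    by (rule CD_p_switch[OF assms(3)])
  then show "CD_p adj \<sigma> p K N x"
    unfolding switch_switch[OF assms(3)] .
qed

end
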